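(* Let $I\ge 2$, $M>3$, $R\ge 1$ be integers and let $\mathcal{M}_1,\mathcal{M}_2,\mathcal{M}_3$ be pairwise disjoint nonempty subsets of $\{1,\dots,M\}$ with $\mathcal{M}_1\cup\mathcal{M}_2\cup\mathcal{M}_3=\{1,\dots,M\}$, of cardinalities $M_1,M_2,M_3$. Let $\mathcal{T}=\mathcal{M}_1\times\mathcal{M}_2\times\mathcal{M}_3$ be the Cartesian coupling, i.e. $\mathcal{T}=\{\{j,k,\ell\}: j\in\mathcal{M}_1,k\in\mathcal{M}_2,\ell\in\mathcal{M}_3\}$. Suppose that the real rank-$R$ CP model for tensors of size $((I-1)M_1+1)\times((I-1)M_2+1)\times((I-1)M_3+1)$ is identifiable (generically unique). Then the rank-$R$ PCTF3D model $(\mu,\Theta)$ for the coupling $\mathcal{T}$ is identifiable.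
   Context: Real rank-$R$ CP model for $I_1\times I_2\times I_3$ tensors: the map $(\boldsymbol\lambda,\mathbf{A},\mathbf{B},\mathbf{C})\mapsto\sum_{r=1}^R\lambda_r\mathbf{a}_r\circ\mathbf{b}_r\circ\mathbf{c}_r$ with $\mathbf{A}\in\mathbb{R}^{I_1\times R}$ etc.; it is identifiable (generically unique) if, for all parameters outside a Lebesgue-null set, every other $R$-term decomposition of the same tensor is obtained by permuting the rank-one terms and rescaling factors within a term. PCTF3D model: a coupling $\mathcal{T}$ is a set of $T$ three-element subsets (triplets) of $\{1,\dots,M\}$. Parameters $\theta=(\theta_1,\dots,\theta_R)$ with $\theta_r=(\lambda_r,\mathbf{a}^{(1)}_r,\dots,\mathbf{a}^{(M)}_r)\in\mathbb{R}\times(\mathbb{R}^I)^M$. The map $\mu:\mathbb{R}^{R(IM+1)}\to\mathbb{R}^{TI^3}$ sends $\theta$ to the tuple, over triplets $\{j,k,\ell\}\in\mathcal{T}$ (with $j<k<\ell$, in a fixed order), of the vectorized tensors $\mathcal{H}^{(jk\ell)}=\sum_{r=1}^R\lambda_r\,\mathbf{a}^{(j)}_r\circ\mathbf{a}^{(k)}_r\circ\mathbf{a}^{(\ell)}_r\in\mathbb{R}^{I\times I\times I}$ (these are the 3D marginals of $\mathcal{H}=\sum_r\lambda_r\mathbf{a}^{(1)}_r\circ\cdots\circ\mathbf{a}^{(M)}_r$). The constraint set is $\Theta=\{\theta:\lambda_r\ge0,\ \sum_r\lambda_r=1,\ \mathbf{a}^{(m)}_r\ge0,\ \mathbf{1}_I^T\mathbf{a}^{(m)}_r=1\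 \forall r,m\}$. The model $(\mu,\Theta)$ is identifiable if for generic $\theta\in\Theta$ (all except a subset of $\Theta$ of measure zero with respect to Lebesgue measure on the affine hull of $\Theta$), every $\theta'\in\Theta$ with $\mu(\theta')=\mu(\theta)$ is obtained from $\theta$ by a permutation of the blocks $\theta_1,\dots,\theta_R$. *)

theory Defs
  imports "HOL-Analysis.Analysis"
begin

text \<open>A CP parameter (lambda, A, B, C) is encoded as a single real vector indexed by
  triples: (0,r,0) is lambda_r, (1,i,r) is A(i,r), (2,i,r) is B(i,r), (3,i,r) is C(i,r)
  (all indices 0-based).\<close>

definition cp_idx :: "nat \<Rightarrow> nat \<Rightarrow> nat \<Rightarrow> nat \<Rightarrow> (nat \<times> nat \<times> nat) set" where
  "cp_idx I1 I2 I3 R =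
     {(0, r, 0) | r. r < R} \<union> {(1, i, r) | i r. i < I1 \<and> r < R}
     \<union> {(2, i, r) | i r. i < I2 \<and> r < R} \<union> {(3, i, r) | i r. i < I3 \<and> r < R}"

definition cp_measure :: "nat \<Rightarrow> nat \<Rightarrow> nat \<Rightarrow> nat \<Rightarrow> (nat \<times> nat \<times> nat \<Rightarrow> real) measure" where
  "cp_measure I1 I2 I3 R = PiM (cp_idx I1 I2 I3 R) (\<lambda>_. lborel)"

definition cp_tensor :: "nat \<Rightarrow> (nat \<times> nat \<times> nat \<Rightarrow> real) \<Rightarrow> nat \<Rightarrow> nat \<Rightarrow> nat \<Rightarrow> real" where
  "cp_tensor R p i1 i2 i3 = (\<Sum>r<R. p (0, r, 0) * p (1, i1, r) * p (2, i2, r) * p (3, i3, r))"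

definition cp_equivalent ::
  "nat \<Rightarrow> nat \<Rightarrow> nat \<Rightarrow> nat \<Rightarrow> (nat \<times> nat \<times> nat \<Rightarrow> real) \<Rightarrow> (nat \<times> nat \<times> nat \<Rightarrow> real) \<Rightarrow> bool" where
  "cp_equivalent I1 I2 I3 R p p' \<longleftrightarrow>
     (\<exists>\<sigma> \<alpha> \<beta> \<gamma> \<delta>. bij_betw \<sigma> {..<R} {..<R} \<and>
        (\<forall>r<R. \<delta> r * \<alpha> r * \<beta> r * \<gamma> r = (1::real) \<and>
               p' (0, r, 0) = \<delta> r * p (0, \<sigma> r, 0) \<and>
               (\<forall>i<I1. p' (1, i, r) = \<alpha> r * p (1, i, \<sigma> r)) \<and>
               (\<forall>i<I2. p' (2, i, r) = \<beta> r * p (2, i, \<sigma> r)) \<and>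
               (\<forall>i<I3. p' (3, i, r) = \<gamma> r * p (3, i, \<sigma> r))))"

definition cp_identifiable :: "nat \<Rightarrow> nat \<Rightarrow> nat \<Rightarrow> nat \<Rightarrow> bool" where
  "cp_identifiable I1 I2 I3 R \<longleftrightarrow>
     (\<exists>N \<in> null_sets (cp_measure I1 I2 I3 R).
        \<forall>p \<in> space (cp_measure I1 I2 I3 R) - N.
          \<forall>p' \<in> space (cp_measure I1 I2 I3 R).
            (\<forall>i1<I1. \<forall>i2<I2. \<forall>i3<I3. cp_tensor R p' i1 i2 i3 = cp_tensor R p i1 i2 i3)
            \<longrightarrow> cp_equivalent I1 I2 I3 R p p')"

text \<open>theta = (lam, a): lam r is lambda_r (r < R), a m r i is the i-th entry of
  a^(m)_r (m in {1..M}, r < R, i < I; indices r and i are 0-based).\<close>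

definition pctf_Theta :: "nat \<Rightarrow> nat \<Rightarrow> nat \<Rightarrow> (nat \<Rightarrow> real) \<Rightarrow> (nat \<Rightarrow> nat \<Rightarrow> nat \<Rightarrow> real) \<Rightarrow> bool" where
  "pctf_Theta I M R lam a \<longleftrightarrow>
     (\<forall>r<R. lam r \<ge> 0) \<and> (\<Sum>r<R. lam r) = 1 \<and>
     (\<forall>m\<in>{1..M}. \<forall>r<R. (\<forall>i<I. a m r i \<ge> 0) \<and> (\<Sum>i<I. a m r i) = 1)"

definition pctf_mu :: "nat \<Rightarrow> nat \<Rightarrow> nat set set \<Rightarrow> (nat \<Rightarrow> real) \<Rightarrow> (nat \<Rightarrow> nat \<Rightarrow> nat \<Rightarrow> real)
    \<Rightarrow> nat \<times> nat \<times> nat \<times> nat \<times> nat \<times> nat \<Rightarrow> real" where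
  "pctf_mu I R T lam a = (\<lambda>(j, k, l, i1, i2, i3).
     if j < k \<and> k < l \<and> {j, k, l} \<in> T \<and> i1 < I \<and> i2 < I \<and> i3 < I
     then (\<Sum>r<R. lam r * a j r i1 * a k r i2 * a l r i3) else 0)"

definition pctf_block_perm :: "nat \<Rightarrow> nat \<Rightarrow> nat \<Rightarrow> (nat \<Rightarrow> real) \<Rightarrow> (nat \<Rightarrow> nat \<Rightarrow> nat \<Rightarrow> real)
    \<Rightarrow> (nat \<Rightarrow> real) \<Rightarrow> (nat \<Rightarrow> nat \<Rightarrow> nat \<Rightarrow> real) \<Rightarrow> bool" where
  "pctf_block_perm I M R lam a lam' a' \<longleftrightarrow>
     (\<exists>\<sigma>. bij_betw \<sigma> {..<R} {..<R} \<and>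
        (\<forall>r<R. lam' r = lam (\<sigma> r) \<and> (\<forall>m\<in>{1..M}. \<forall>i<I. a' m r i = a m (\<sigma> r) i)))"

text \<open>Coordinates of the affine hull of Theta: the affine hull is
  {sum lam = 1} x prod {1^T a = 1}; it is parametrized affinely-isomorphically by dropping
  lam_(R-1) and the last entry a^(m)_r(I-1) of every factor. Null sets of Lebesgue measure
  on the affine hull are exactly the preimages of Lebesgue-null sets of these coordinates.\<close>
definition pctf_idx :: "nat \<Rightarrow> nat \<Rightarrow> nat \<Rightarrow> (nat \<times> nat \<times> nat \<times> nat) set" where
  "pctf_idx I M R = {(0, 0, r, 0) | r. r + 1 < R} \<union>
     {(1, m, r, i) | m r i. m \<in> {1..M} \<and> r < R \<and> i + 1 < I}"

definition pctf_coords :: "nat \<Rightarrow> nat \<Rightarrow> nat \<Rightarrow> (nat \<Rightarrow> real) \<Rightarrow> (nat \<Rightarrow> nat \<Rightarrow> nat \<Rightarrow> real)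
    \<Rightarrow> (nat \<times> nat \<times> nat \<times> nat \<Rightarrow> real)" where
  "pctf_coords I M R lam a =
     restrict (\<lambda>(c, m, r, i). if c = 0 then lam r else a m r i) (pctf_idx I M R)"

definition pctf_identifiable :: "nat \<Rightarrow> nat \<Rightarrow> nat \<Rightarrow> nat set set \<Rightarrow> bool" where
  "pctf_identifiable I M R T \<longleftrightarrow>
     (\<exists>N \<in> null_sets (PiM (pctf_idx I M R) (\<lambda>_. lborel)).
        \<forall>lam a. pctf_Theta I M R lam a \<and> pctf_coords I M R lam a \<notin> N \<longrightarrow>
          (\<forall>lam' a'. pctf_Theta I M R lam' a' \<and> pctf_mu I R T lam' a' = pctf_mu I R T lam a
             \<longrightarrow> pctf_block_perm I M R lam a lam' a'))"

end

theory Submission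
  imports Defs
begin

text \<open>A row of ones in a CP factor is the marginalisation over one variable, and the last entry of
  a factor vector \<open>a m r\<close> is fixed by the others since it sums to \<open>1\<close>. Hence, stacking a row of
  ones on top of the first \<open>I - 1\<close> entries of the vectors \<open>a m r\<close>, \<open>m \<in> M\<^sub>g\<close>, gives three CP factors
  whose tensor is a linear function of the 3D marginals along the Cartesian coupling. Two
  parameters with the same \<open>\<mu>\<close> thus give two CP decompositions of one tensor; CP identifiability
  makes them agree up to permutation and scaling, the rows of ones fix the scalings, and the
  simplex constraints turn the permutation of rank-one terms into a permutation of the blocks.

  For genericity the rows of ones are replaced by generic nonzero constants \<open>\<alpha>\<close> and the total
  mass by a generic \<open>t \<noteq> 0\<close>, which multiplies the tensor by \<open>t\<close> and keeps uniqueness. The remaining CP coordinates are then a shear, rescaling and reindexing of the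
  affine coordinates of \<open>\<theta>\<close>, so by Fubini the exceptional null set of the CP model pulls back
  to a null set.\<close>

abbreviation lborel_on :: "'i set \<Rightarrow> ('i \<Rightarrow> real) measure" where
  "lborel_on V \<equiv> PiM V (\<lambda>_. lborel)"

interpretation lborel_product: product_sigma_finite "\<lambda>_::'i. (lborel::real measure)"
  by standard

lemma AE_section_in_null_sets:
  assumes "finite U" "finite V" "U \<inter> V = {}" and N: "N \<in> null_sets (lborel_on (U \<union> V))"
  shows "AE u in lborel_on U. {v \<in> space (lborel_on V). merge U V (u, v) \<in> N} \<in> null_sets (lborel_on V)"
proof -
  have N_sets: "N \<in> sets (lborel_on (U \<union> V))"
    using N by auto
  let ?section = "\<lambda>u. (\<lambda>v. merge U V (u, v)) -` N \<inter> space (lborel_on V)"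
  have "(\<integral>\<^sup>+u. emeasure (lborel_on V) (?section u) \<partial>lborel_on U) = 0"
    using null_setsD1[OF N] lborel_product.emeasure_fold_integral[OF assms(3,1,2) N_sets] by simp
  then have "AE u in lborel_on U. emeasure (lborel_on V) (?section u) = 0"
    using lborel_product.emeasure_fold_measurable[OF assms(3,1,2) N_sets]
    by (subst (asm) nn_integral_0_iff_AE) auto
  moreover have "?section u \<in> sets (lborel_on V)" if "u \<in> space (lborel_on U)" for u
    using that N_sets by (intro measurable_sets[OF measurable_Pair2[OF measurable_merge]]) auto
  ultimately show ?thesis
    by (elim AE_mp) (auto simp: null_sets_def vimage_def Int_def conj_commute)
qed

lemma AE_lborel_on_coordinates_nonzero:
  assumes "finite U"
  shows "AE u in lborel_on U. \<forall>j\<in>U. u j \<noteq> 0"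
proof (subst AE_finite_all[OF assms], intro ballI AE_I')
  fix j assume j: "j \<in> U"
  let ?A = "\<lambda>i. if i = j then {0::real} else UNIV"
  show "{u \<in> space (lborel_on U). \<not> u j \<noteq> 0} \<subseteq> PiE U ?A"
    by (auto simp: space_PiM PiE_iff extensional_def)
  have "emeasure (lborel_on U) (PiE U ?A) = (\<Prod>i\<in>U. emeasure lborel (?A i))"
    using assms by (intro lborel_product.emeasure_PiM) auto
  also have "\<dots> = 0"
    using assms j by (intro prod_zero[of U]) (auto intro!: bexI[of _ j])
  finally show "PiE U ?A \<in> null_sets (lborel_on U)"
    using assms by (auto intro!: sets_PiM_I_finite)
qed

lemma AE_lborel_on_imp_ex:
  assumes "finite U" "AE u in lborel_on U. P u"
  shows "\<exists>u\<in>space (lborel_on U). P u"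
proof (rule ccontr)
  assume "\<not> ?thesis"
  with assms(2) have "AE u in lborel_on U. False"
    by (auto elim: AE_mp)
  then have "emeasure (lborel_on U) (space (lborel_on U)) = 0"
    using ae_filter_eq_bot_iff trivial_limit_def by auto
  moreover have "emeasure (lborel_on U) (space (lborel_on U)) = (\<Prod>i\<in>U. emeasure lborel (UNIV::real set))"
    using assms by (subst space_PiM, subst lborel_product.emeasure_PiM) (auto simp: space_PiM)
  ultimately show False
    by (simp add: assms)
qed

lemma exists_nonzero_null_section:
  assumes "finite U" "finite V" "U \<inter> V = {}" "N \<in> null_sets (lborel_on (U \<union> V))"
  obtains u where "u \<in> space (lborel_on U)" "\<forall>j\<in>U. u j \<noteq> 0"
    and "{v \<in> space (lborel_on V). merge U V (u, v) \<in> N} \<in> null_sets (lborel_on V)"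
proof -
  have "AE u in lborel_on U. (\<forall>j\<in>U. u j \<noteq> 0) \<and>
      {v \<in> space (lborel_on V). merge U V (u, v) \<in> N} \<in> null_sets (lborel_on V)"
    using AE_lborel_on_coordinates_nonzero[OF assms(1)] AE_section_in_null_sets[OF assms]
    by eventually_elim auto
  with AE_lborel_on_imp_ex[OF assms(1)] that show ?thesis
    by blast
qed

lemma measurable_shear:
  assumes "l \<in> V" and [measurable]: "h \<in> borel_measurable (lborel_on V)"
  shows "(\<lambda>x. x(l := a * x l + h x)) \<in> measurable (lborel_on V) (lborel_on V)"
proof -
  have "(\<lambda>x i. if i = l then a * x l + h x else x i) \<in> measurable (lborel_on V) (lborel_on V)"
  proof (rule measurable_PiM_single')
    show "(\<lambda>x. if i = l then a * x l + h x else x i) \<in> measurable (lborel_on V) lborel" if "i \<in> V" for i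
      unfolding measurable_lborel2 using that assms(1) by (cases "i = l") simp_all
  qed (use assms(1) in \<open>auto simp: space_PiM PiE_iff extensional_def\<close>)
  then show ?thesis
    by (simp add: fun_upd_def)
qed

lemma borel_measurable_nn_integral_fun_upd:
  assumes "l \<notin> V" and f[measurable]: "f \<in> borel_measurable (lborel_on (insert l V))"
  shows "(\<lambda>x. \<integral>\<^sup>+y. f (x(l := y)) \<partial>lborel) \<in> borel_measurable (lborel_on V)"
proof -
  have "(\<lambda>p i. if i = l then snd p else fst p i)
      \<in> measurable (lborel_on V \<Otimes>\<^sub>M lborel) (lborel_on (insert l V))"
  proof (rule measurable_PiM_single')
    show "(\<lambda>p. if i = l then snd p else fst p i) \<in> measurable (lborel_on V \<Otimes>\<^sub>M lborel) lborel"
      if "i \<in> insert l V" for i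
      unfolding measurable_lborel2 using that by (cases "i = l") auto
  qed (use assms(1) in
      \<open>auto simp: space_pair_measure space_PiM PiE_iff extensional_def split: if_splits\<close>)
  then have [measurable]:
    "(\<lambda>(x, y). x(l := y)) \<in> measurable (lborel_on V \<Otimes>\<^sub>M lborel) (lborel_on (insert l V))"
    by (simp add: fun_upd_def case_prod_beta)
  show ?thesis
    by (rule lborel.borel_measurable_nn_integral) measurable
qed

lemma nn_integral_fun_upd_affine:
  assumes "l \<notin> V" "x \<in> space (lborel_on V)" "N \<in> sets (lborel_on (insert l V))" "a \<noteq> 0"
  shows "(\<integral>\<^sup>+y. indicator N (x(l := b + a * y)) \<partial>lborel)
    = ennreal (1 / \<bar>a\<bar>) * (\<integral>\<^sup>+y. indicator N (x(l := y)) \<partial>lborel)"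
proof -
  have "(\<lambda>y. x(l := y)) \<in> measurable lborel (lborel_on (insert l V))"
    using measurable_component_update[OF assms(2,1)] by simp
  from measurable_compose[OF this borel_measurable_indicator[OF assms(3)]]
  have "(\<lambda>y. indicator N (x(l := y)) :: ennreal) \<in> borel_measurable borel"
    by simp
  from nn_integral_real_affine[OF this assms(4), of b] assms(4) show ?thesis
    by (simp add: mult.assoc[symmetric] ennreal_mult[symmetric])
qed

lemma null_sets_shear_preimage:
  assumes "finite V" "l \<in> V" "a \<noteq> 0"
    and h[measurable]: "h \<in> borel_measurable (lborel_on V)"
    and h_indep: "\<And>x y. h (x(l := y)) = h x"
    and N: "N \<in> null_sets (lborel_on V)"
  shows "{x \<in> space (lborel_on V). x(l := a * x l + h x) \<in> N} \<in> null_sets (lborel_on V)"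
    (is "?B \<in> _")
proof -
  define V0 where "V0 = V - {l}"
  have V: "V = insert l V0" "l \<notin> V0" "finite V0"
    using assms(1,2) by (auto simp: V0_def)
  have N_sets [measurable]: "N \<in> sets (lborel_on V)"
    using N by auto
  have B_sets: "?B \<in> sets (lborel_on V)"
    using measurable_sets[OF measurable_shear[OF assms(2) h] N_sets]
    by (simp add: vimage_def Int_def conj_commute)
  have fiber: "(\<integral>\<^sup>+y. indicator ?B (x(l := y)) \<partial>lborel)
      = ennreal (1 / \<bar>a\<bar>) * (\<integral>\<^sup>+y. indicator N (x(l := y)) \<partial>lborel)"
    if x: "x \<in> space (lborel_on V0)" for x
  proof -
    have "indicator ?B (x(l := y)) = (indicator N (x(l := h x + a * y)) :: ennreal)" for y
      using x V by (auto simp: indicator_def h_indep add.commute space_PiM PiE_iff extensional_def)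
    then show ?thesis
      using nn_integral_fun_upd_affine[OF V(2) x _ assms(3)] N_sets V(1) by simp
  qed
  have "emeasure (lborel_on V) ?B = (\<integral>\<^sup>+x. indicator ?B x \<partial>lborel_on V)"
    using B_sets by simp
  also have "\<dots> = (\<integral>\<^sup>+x. \<integral>\<^sup>+y. indicator ?B (x(l := y)) \<partial>lborel \<partial>lborel_on V0)"
    using B_sets V(2,3) unfolding V(1) by (intro lborel_product.product_nn_integral_insert) auto
  also have "\<dots> = (\<integral>\<^sup>+x. ennreal (1 / \<bar>a\<bar>) * (\<integral>\<^sup>+y. indicator N (x(l := y)) \<partial>lborel) \<partial>lborel_on V0)"
    using fiber by (intro nn_integral_cong) simp
  also have "\<dots> = ennreal (1 / \<bar>a\<bar>) * (\<integral>\<^sup>+x. \<integral>\<^sup>+y. indicator N (x(l := y)) \<partial>lborel \<partial>lborel_on V0)"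
    using V N_sets by (intro nn_integral_cmult borel_measurable_nn_integral_fun_upd) auto
  also have "(\<integral>\<^sup>+x. \<integral>\<^sup>+y. indicator N (x(l := y)) \<partial>lborel \<partial>lborel_on V0)
      = (\<integral>\<^sup>+x. indicator N x \<partial>lborel_on V)"
    using lborel_product.product_nn_integral_insert[OF V(3,2), of "indicator N"] N_sets V(1) by simp
  also have "\<dots> = 0"
    using N_sets null_setsD1[OF N] by simp
  finally have "emeasure (lborel_on V) ?B = 0"
    by (simp only: mult_zero_right)
  with B_sets show ?thesis
    by (simp only: null_sets_def mem_Collect_eq)
qed

lemma exists_nonzero_null_hyperplane_section:
  assumes "finite V" "l \<notin> V" "S \<subseteq> V" "w l \<noteq> 0"
    and N: "N \<in> null_sets (lborel_on (insert l V))"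
  obtains t where "t \<noteq> 0"
    and "{y \<in> space (lborel_on V). y(l := (t - (\<Sum>v\<in>S. w v * y v)) / w l) \<in> N} \<in> null_sets (lborel_on V)"
proof -
  let ?h = "\<lambda>x. - (\<Sum>v\<in>S. w v * x v) / w l"
  let ?N' = "{x \<in> space (lborel_on (insert l V)). x(l := (1 / w l) * x l + ?h x) \<in> N}"
  have "?N' \<in> null_sets (lborel_on (insert l V))"
  proof (rule null_sets_shear_preimage[OF _ _ _ _ _ N])
    have "(\<lambda>x. x v) \<in> borel_measurable (lborel_on (insert l V))" if "v \<in> S" for v
      using measurable_component_singleton[of v "insert l V" "\<lambda>_. lborel"] that assms(3) by auto
    then show "?h \<in> borel_measurable (lborel_on (insert l V))"
      by (intro borel_measurable_divide borel_measurable_uminus borel_measurable_sum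
          borel_measurable_times borel_measurable_const) auto
    show "?h (x(l := y)) = ?h x" for x y
      using assms(2,3) by (auto intro!: sum.cong arg_cong[where f = "\<lambda>s. - s / w l"])
  qed (use assms in auto)
  then obtain z where z: "z \<in> space (lborel_on {l})" "z l \<noteq> 0"
    and z_section: "{y \<in> space (lborel_on V). merge {l} V (z, y) \<in> ?N'} \<in> null_sets (lborel_on V)"
    using exists_nonzero_null_section[of "{l}" V ?N'] assms(1,2) by auto
  have section_eq: "merge {l} V (z, y) \<in> ?N' \<longleftrightarrow> y(l := (z l - (\<Sum>v\<in>S. w v * y v)) / w l) \<in> N"
    if "y \<in> space (lborel_on V)" for y
  proof -
    have "merge {l} V (z, y) = y(l := z l)"
      using that by (auto simp: merge_def space_PiM PiE_iff extensional_def)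
    moreover have "(\<Sum>v\<in>S. w v * (y(l := z l)) v) = (\<Sum>v\<in>S. w v * y v)"
      using assms(2,3) by (intro sum.cong) auto
    moreover have "y(l := z l) \<in> space (lborel_on (insert l V))"
      using that by (auto simp: space_PiM PiE_iff extensional_def)
    ultimately show ?thesis
      by (simp add: diff_divide_distrib)
  qed
  have "{y \<in> space (lborel_on V). y(l := (z l - (\<Sum>v\<in>S. w v * y v)) / w l) \<in> N}
      = {y \<in> space (lborel_on V). merge {l} V (z, y) \<in> ?N'}"
    using section_eq by blast
  with z_section z(2) that show ?thesis
    by simp
qed

lemma null_sets_scale_preimage:
  assumes "finite V" "\<forall>v\<in>V. s v \<noteq> 0" and Y: "Y \<in> null_sets (lborel_on V)"
  shows "{y \<in> space (lborel_on V). (\<lambda>v\<in>V. s v * y v) \<in> Y} \<in> null_sets (lborel_on V)"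
proof -
  let ?scale = "\<lambda>W y. \<lambda>v\<in>V. if v \<in> W then s v * y v else y v"
  have "{y \<in> space (lborel_on V). ?scale W y \<in> Y} \<in> null_sets (lborel_on V)"
    if "finite W" "W \<subseteq> V" for W
    using that
  proof (induction W rule: finite_induct)
    case empty
    have "?scale {} y = y" if "y \<in> space (lborel_on V)" for y
      using that by (auto simp: space_PiM PiE_iff extensional_def)
    then have "{y \<in> space (lborel_on V). ?scale {} y \<in> Y} = Y"
      using Y[THEN null_sets.sets_into_space] by auto
    with Y show ?case
      by (simp only:)
  next
    case (insert w W)
    let ?Z = "{y \<in> space (lborel_on V). ?scale W y \<in> Y}"
    have w: "w \<in> V"
      using insert.prems by simp
    have "{y \<in> space (lborel_on V). y(w := s w * y w + 0) \<in> ?Z} \<in> null_sets (lborel_on V)"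
      using insert.prems w assms(2) by (intro null_sets_shear_preimage[OF assms(1) w] insert.IH) auto
    moreover have "{y \<in> space (lborel_on V). y(w := s w * y w + 0) \<in> ?Z}
        = {y \<in> space (lborel_on V). ?scale (insert w W) y \<in> Y}"
    proof -
      have "y(w := s w * y w) \<in> space (lborel_on V)"
        "?scale W (y(w := s w * y w)) = ?scale (insert w W) y"
        if "y \<in> space (lborel_on V)" for y
        using that w insert.hyps by (auto simp: space_PiM PiE_iff extensional_def)
      then show ?thesis
        by auto
    qed
    ultimately show ?case
      by metis
  qed
  from this[OF assms(1) order_refl] show ?thesis
    by (simp cong: restrict_cong)
qed

lemma distr_lborel_on_reindex:
  assumes "finite V" and \<rho>: "bij_betw \<rho> V J"
  shows "distr (lborel_on J) (lborel_on V) (\<lambda>c. \<lambda>v\<in>V. c (\<rho> v)) = lborel_on V"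
proof (rule lborel_product.PiM_eqI[OF assms(1)])
  fix A :: "_ \<Rightarrow> real set" assume A: "\<And>i. i \<in> V \<Longrightarrow> A i \<in> sets lborel"
  let ?\<rho>' = "inv_into V \<rho>"
  have \<rho>_in: "\<rho> v \<in> J" if "v \<in> V" for v
    using \<rho> that by (auto simp: bij_betw_def)
  have \<rho>'_in: "?\<rho>' j \<in> V" "\<rho> (?\<rho>' j) = j" if "j \<in> J" for j
    using \<rho> that by (auto simp: bij_betw_def inv_into_into f_inv_into_f)
  have \<rho>'_\<rho>: "?\<rho>' (\<rho> v) = v" if "v \<in> V" for v
    using \<rho> that by (auto simp: bij_betw_def)
  have measurable: "(\<lambda>c. \<lambda>v\<in>V. c (\<rho> v)) \<in> measurable (lborel_on J) (lborel_on V)"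
    using \<rho>_in by (intro measurable_restrict) auto
  have "(\<lambda>c. \<lambda>v\<in>V. c (\<rho> v)) -` PiE V A \<inter> space (lborel_on J) = PiE J (\<lambda>j. A (?\<rho>' j))"
    using \<rho>_in \<rho>'_in \<rho>'_\<rho> by (auto simp: space_PiM PiE_iff extensional_def) metis+
  then have "emeasure (distr (lborel_on J) (lborel_on V) (\<lambda>c. \<lambda>v\<in>V. c (\<rho> v))) (PiE V A)
      = emeasure (lborel_on J) (PiE J (\<lambda>j. A (?\<rho>' j)))"
    using A measurable assms(1) by (subst emeasure_distr) (auto intro!: sets_PiM_I_finite)
  also have "\<dots> = (\<Prod>j\<in>J. emeasure lborel (A (?\<rho>' j)))"
    using A \<rho>'_in bij_betw_finite[OF \<rho>] assms(1) by (intro lborel_product.emeasure_PiM) auto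
  also have "\<dots> = (\<Prod>v\<in>V. emeasure lborel (A v))"
    using prod.reindex_bij_betw[OF \<rho>, of "\<lambda>j. emeasure lborel (A (?\<rho>' j))"] \<rho>'_\<rho>
    by (simp cong: prod.cong)
  finally show "emeasure (distr (lborel_on J) (lborel_on V) (\<lambda>c. \<lambda>v\<in>V. c (\<rho> v))) (PiE V A)
      = (\<Prod>v\<in>V. emeasure lborel (A v))" .
qed simp

lemma null_sets_reindex_scale_preimage:
  assumes "finite V" and \<rho>: "bij_betw \<rho> V J" and "\<forall>v\<in>V. s v \<noteq> 0"
    and Y: "Y \<in> null_sets (lborel_on V)"
  shows "{c \<in> space (lborel_on J). (\<lambda>v\<in>V. s v * c (\<rho> v)) \<in> Y} \<in> null_sets (lborel_on J)"
proof -
  let ?reindex = "\<lambda>c. \<lambda>v\<in>V. c (\<rho> v)"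
  let ?Y' = "{y \<in> space (lborel_on V). (\<lambda>v\<in>V. s v * y v) \<in> Y}"
  have Y': "?Y' \<in> null_sets (lborel_on V)"
    using null_sets_scale_preimage[OF assms(1,3) Y] .
  have measurable: "?reindex \<in> measurable (lborel_on J) (lborel_on V)"
    using \<rho> by (intro measurable_restrict) (auto simp: bij_betw_def)
  have "emeasure (lborel_on J) (?reindex -` ?Y' \<inter> space (lborel_on J))
      = emeasure (distr (lborel_on J) (lborel_on V) ?reindex) ?Y'"
    using Y' measurable by (subst emeasure_distr) auto
  also have "\<dots> = 0"
    using null_setsD1[OF Y'] by (simp add: distr_lborel_on_reindex[OF assms(1) \<rho>])
  finally have "emeasure (lborel_on J) (?reindex -` ?Y' \<inter> space (lborel_on J)) = 0" .
  moreover have "?reindex -` ?Y' \<inter> space (lborel_on J) \<in> sets (lborel_on J)"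
    using measurable_sets[OF measurable] Y' by blast
  ultimately have "?reindex -` ?Y' \<inter> space (lborel_on J) \<in> null_sets (lborel_on J)"
    by (simp only: null_sets_def mem_Collect_eq)
  moreover have "?reindex -` ?Y' \<inter> space (lborel_on J)
      = {c \<in> space (lborel_on J). (\<lambda>v\<in>V. s v * c (\<rho> v)) \<in> Y}"
    using measurable by (auto simp: measurable_def cong: restrict_cong)
  ultimately show ?thesis
    by simp
qed

lemma pctf_coords_weight: "r + 1 < R \<Longrightarrow> pctf_coords I M R lam a (0, 0, r, 0) = lam r"
  by (simp add: pctf_coords_def pctf_idx_def)

lemma pctf_coords_factor:
  "m \<in> {1..M} \<Longrightarrow> r < R \<Longrightarrow> i + 1 < I \<Longrightarrow> pctf_coords I M R lam a (1, m, r, i) = a m r i"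
  by (simp add: pctf_coords_def pctf_idx_def)

definition marginal3 ::
    "nat \<Rightarrow> (nat \<Rightarrow> real) \<Rightarrow> (nat \<Rightarrow> nat \<Rightarrow> nat \<Rightarrow> real) \<Rightarrow> nat \<Rightarrow> nat \<Rightarrow> nat \<Rightarrow> nat \<Rightarrow> nat \<Rightarrow> nat \<Rightarrow> real" where
  "marginal3 R lam a j k l i1 i2 i3 = (\<Sum>r<R. lam r * a j r i1 * a k r i2 * a l r i3)"

lemma marginal3_perm:
  "marginal3 R lam a j l k i1 i3 i2 = marginal3 R lam a j k l i1 i2 i3"
  "marginal3 R lam a k j l i2 i1 i3 = marginal3 R lam a j k l i1 i2 i3"
  "marginal3 R lam a k l j i2 i3 i1 = marginal3 R lam a j k l i1 i2 i3"
  "marginal3 R lam a l j k i3 i1 i2 = marginal3 R lam a j k l i1 i2 i3"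
  "marginal3 R lam a l k j i3 i2 i1 = marginal3 R lam a j k l i1 i2 i3"
  by (simp_all add: marginal3_def mult_ac)

lemma pctf_mu_eq_imp_marginal3_eq:
  assumes mu: "pctf_mu I R T lam a = pctf_mu I R T lam' a'"
    and T: "{j, k, l} \<in> T" and distinct: "distinct [j, k, l]"
    and "i1 < I" "i2 < I" "i3 < I"
  shows "marginal3 R lam a j k l i1 i2 i3 = marginal3 R lam' a' j k l i1 i2 i3"
proof -
  have sorted: "marginal3 R lam a j' k' l' x y z = marginal3 R lam' a' j' k' l' x y z"
    if "j' < k'" "k' < l'" "{j', k', l'} = {j, k, l}" "x < I" "y < I" "z < I" for j' k' l' x y z
    using fun_cong[OF mu, of "(j', k', l', x, y, z)"] that T by (simp add: pctf_mu_def marginal3_def)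
  from distinct consider "j < k" "k < l" | "j < l" "l < k" | "k < j" "j < l"
    | "k < l" "l < j" | "l < j" "j < k" | "l < k" "k < j"
    by fastforce
  then show ?thesis
  proof cases
    case 1
    then show ?thesis
      using sorted[of j k l i1 i2 i3] assms(4-6) by simp
  next
    case 2
    then show ?thesis
      using sorted[of j l k i1 i3 i2] assms(4-6) marginal3_perm(1) by (simp add: insert_commute)
  next
    case 3
    then show ?thesis
      using sorted[of k j l i2 i1 i3] assms(4-6) marginal3_perm(2) by (simp add: insert_commute)
  next
    case 4
    then show ?thesis
      using sorted[of k l j i2 i3 i1] assms(4-6) marginal3_perm(3) by (simp add: insert_commute)
  next
    case 5
    then show ?thesis
      using sorted[of l j k i3 i1 i2] assms(4-6) marginal3_perm(4) by (simp add: insert_commute)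
  next
    case 6
    then show ?thesis
      using sorted[of l k j i3 i2 i1] assms(4-6) marginal3_perm(5) by (simp add: insert_commute)
  qed
qed

lemma sum_trilinear:
  fixes l :: "'r \<Rightarrow> 'a::comm_semiring_1"
  shows "(\<Sum>r\<in>A. l r * (\<Sum>i\<in>B1. x i * f i r) * (\<Sum>j\<in>B2. y j * g j r) * (\<Sum>k\<in>B3. z k * h k r))
    = (\<Sum>i\<in>B1. \<Sum>j\<in>B2. \<Sum>k\<in>B3. x i * y j * z k * (\<Sum>r\<in>A. l r * f i r * g j r * h k r))"
proof -
  have "(\<Sum>r\<in>A. l r * (\<Sum>i\<in>B1. x i * f i r) * (\<Sum>j\<in>B2. y j * g j r) * (\<Sum>k\<in>B3. z k * h k r))
      = (\<Sum>r\<in>A. \<Sum>i\<in>B1. \<Sum>j\<in>B2. \<Sum>k\<in>B3. x i * y j * z k * (l r * f i r * g j r * h k r))"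
    by (simp add: sum_distrib_left sum_distrib_right mult_ac)
  also have "\<dots> = (\<Sum>i\<in>B1. \<Sum>j\<in>B2. \<Sum>k\<in>B3. \<Sum>r\<in>A. x i * y j * z k * (l r * f i r * g j r * h k r))"
    by (subst sum.swap, rule sum.cong, simp, subst sum.swap, rule sum.cong, simp, rule sum.swap)
  finally show ?thesis
    by (simp add: sum_distrib_left mult.assoc)
qed

lemma eq_if_sum_eq_and_eq_but_last:
  fixes x y :: "nat \<Rightarrow> 'a::ab_group_add"
  assumes "(\<Sum>i<n. x i) = (\<Sum>i<n. y i)" "\<And>i. i + 1 < n \<Longrightarrow> x i = y i" "i < n"
  shows "x i = y i"
proof (cases "i + 1 < n")
  case False
  with assms(3) have n: "n = Suc i"
    by simp
  have "(\<Sum>i<i. x i) = (\<Sum>i<i. y i)"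
    using assms(2) n by (intro sum.cong) auto
  with assms(1) show ?thesis
    by (simp add: n)
qed (use assms(2) in simp)

locale cartesian_coupling =
  fixes I M R :: nat and M1 M2 M3 :: "nat set"
  assumes I_ge_2: "I \<ge> 2" and R_pos: "R \<ge> 1"
    and nonempty: "M1 \<noteq> {}" "M2 \<noteq> {}" "M3 \<noteq> {}"
    and disjoint: "M1 \<inter> M2 = {}" "M1 \<inter> M3 = {}" "M2 \<inter> M3 = {}"
    and partition: "M1 \<union> M2 \<union> M3 = {1..M}"
begin

definition block :: "nat \<Rightarrow> nat set" where
  "block g = (if g = 1 then M1 else if g = 2 then M2 else M3)"

definition block_of :: "nat \<Rightarrow> nat" where
  "block_of m = (if m \<in> M1 then 1 else if m \<in> M2 then 2 else 3)"

definition enum :: "nat \<Rightarrow> nat \<Rightarrow> nat" where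
  "enum g = (!) (sorted_list_of_set (block g))"

definition rank :: "nat \<Rightarrow> nat" where
  "rank m = inv_into {..<card (block (block_of m))} (enum (block_of m)) m"

definition cp_dim :: "nat \<Rightarrow> nat" where
  "cp_dim g = (I - 1) * card (block g) + 1"

text \<open>Row \<open>k \<ge> 1\<close> of the \<open>g\<close>-th CP factor holds entry \<open>row_entry k\<close> of the factor of
  the variable \<open>row_variable g k\<close>; row \<open>0\<close> holds the sums of the factors, which are \<open>1\<close> on \<open>\<Theta>\<close>.\<close>

definition row_variable :: "nat \<Rightarrow> nat \<Rightarrow> nat" where
  "row_variable g k = enum g (if k = 0 then 0 else (k - 1) div (I - 1))"

definition row_entry :: "nat \<Rightarrow> nat" where
  "row_entry k = (k - 1) mod (I - 1)"

definition row_index :: "nat \<Rightarrow> nat \<Rightarrow> nat" where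
  "row_index m i = 1 + rank m * (I - 1) + i"

lemma block_cases:
  assumes "g \<in> {1, 2, 3}"
  obtains "g = 1" "block g = M1" | "g = 2" "block g = M2" | "g = 3" "block g = M3"
  using assms by (auto simp: block_def)

lemma block_subset: "g \<in> {1, 2, 3} \<Longrightarrow> block g \<subseteq> {1..M}"
  using partition by (elim block_cases) auto

lemma finite_block: "g \<in> {1, 2, 3} \<Longrightarrow> finite (block g)"
  using block_subset finite_subset by blast

lemma card_block_pos:
  assumes "g \<in> {1, 2, 3}"
  shows "card (block g) > 0"
  using finite_block[OF assms] nonempty assms by (auto simp: card_gt_0_iff block_def)

lemma bij_betw_enum: "g \<in> {1, 2, 3} \<Longrightarrow> bij_betw (enum g) {..<card (block g)} (block g)"
  unfolding enum_def using finite_block by (intro bij_betw_nth) auto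

lemma enum_in_block: "g \<in> {1, 2, 3} \<Longrightarrow> q < card (block g) \<Longrightarrow> enum g q \<in> block g"
  using bij_betw_enum by (auto simp: bij_betw_def)

lemma block_of_nonzero: "block_of m \<noteq> 0"
  by (simp add: block_of_def)

lemma block_of_in_block: "m \<in> {1..M} \<Longrightarrow> block_of m \<in> {1, 2, 3} \<and> m \<in> block (block_of m)"
  using partition by (auto simp: block_of_def block_def)

lemma block_of_eq: "g \<in> {1, 2, 3} \<Longrightarrow> m \<in> block g \<Longrightarrow> block_of m = g"
  using disjoint by (elim block_cases) (auto simp: block_of_def)

lemma enum_rank: "m \<in> {1..M} \<Longrightarrow> rank m < card (block (block_of m)) \<and> enum (block_of m) (rank m) = m"
  using block_of_in_block bij_betw_enum unfolding rank_def bij_betw_def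
  by (metis f_inv_into_f inv_into_into lessThan_iff)

lemma rank_enum: "g \<in> {1, 2, 3} \<Longrightarrow> q < card (block g) \<Longrightarrow> rank (enum g q) = q"
  using block_of_eq enum_in_block bij_betw_enum unfolding rank_def bij_betw_def by auto

lemma row_position_bound:
  assumes "1 \<le> k" "k < cp_dim g"
  shows "(k - 1) div (I - 1) < card (block g)"
proof -
  have "k - 1 < (I - 1) * card (block g)"
    using assms by (simp add: cp_dim_def)
  then show ?thesis
    by (simp add: less_mult_imp_div_less mult.commute)
qed

lemma row_variable_in_block:
  assumes "g \<in> {1, 2, 3}" "k < cp_dim g"
  shows "row_variable g k \<in> block g"
  using assms card_block_pos[OF assms(1)] row_position_bound[of k g]
  by (cases "k = 0") (auto simp: row_variable_def enum_in_block)

lemma row_entry_bound: "row_entry k + 1 < I"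
proof -
  have "(k - 1) mod (I - 1) < I - 1"
    using I_ge_2 by simp
  then show ?thesis
    by (simp add: row_entry_def)
qed

lemma row_index_row_variable:
  assumes "g \<in> {1, 2, 3}" "1 \<le> k" "k < cp_dim g"
  shows "row_index (row_variable g k) (row_entry k) = k"
  using assms row_position_bound[OF assms(2,3)] div_mult_mod_eq[of "k - 1" "I - 1"]
  by (simp add: row_index_def row_variable_def row_entry_def rank_enum)

lemma row_index_inverse:
  assumes "m \<in> {1..M}" "i + 1 < I"
  shows "row_variable (block_of m) (row_index m i) = m" "row_entry (row_index m i) = i"
    and "1 \<le> row_index m i" "row_index m i < cp_dim (block_of m)"
proof -
  have i: "i < I - 1"
    using assms(2) by simp
  then show "row_variable (block_of m) (row_index m i) = m" "row_entry (row_index m i) = i"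
    using enum_rank[OF assms(1)] by (simp_all add: row_variable_def row_entry_def row_index_def)
  show "1 \<le> row_index m i"
    by (simp add: row_index_def)
  have "rank m * (I - 1) + i < (rank m + 1) * (I - 1)"
    using i by simp
  also have "\<dots> \<le> card (block (block_of m)) * (I - 1)"
    using enum_rank[OF assms(1)] by (intro mult_right_mono) auto
  finally show "row_index m i < cp_dim (block_of m)"
    by (simp add: row_index_def cp_dim_def mult.commute)
qed

definition K :: "(nat \<times> nat \<times> nat) set" where
  "K = cp_idx (cp_dim 1) (cp_dim 2) (cp_dim 3) R"

definition J :: "(nat \<times> nat \<times> nat \<times> nat) set" where
  "J = pctf_idx I M R"

definition ones_idx :: "(nat \<times> nat \<times> nat) set" where
  "ones_idx = {(g, 0, r) | g r. g \<in> {1, 2, 3} \<and> r < R}"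

definition last_weight_idx :: "nat \<times> nat \<times> nat" where
  "last_weight_idx = (0, R - 1, 0)"

definition weight_idx :: "(nat \<times> nat \<times> nat) set" where
  "weight_idx = {(0, r, 0) | r. r + 1 < R}"

definition free_idx :: "(nat \<times> nat \<times> nat) set" where
  "free_idx = weight_idx \<union> {(g, k, r) | g k r. g \<in> {1, 2, 3} \<and> 1 \<le> k \<and> k < cp_dim g \<and> r < R}"

definition coord_index :: "nat \<times> nat \<times> nat \<Rightarrow> nat \<times> nat \<times> nat \<times> nat" where
  "coord_index = (\<lambda>(d, k, r). if d = 0 then (0, 0, k, 0) else (1, row_variable d k, r, row_entry k))"

definition cp_index :: "nat \<times> nat \<times> nat \<times> nat \<Rightarrow> nat \<times> nat \<times> nat" where
  "cp_index = (\<lambda>(c, m, r, i). if c = 0 then (0, r, 0) else (block_of m, row_index m i, r))"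

lemma K_iff: "(d, k, r) \<in> K \<longleftrightarrow> (d = 0 \<and> k < R \<and> r = 0) \<or> (d \<in> {1, 2, 3} \<and> k < cp_dim d \<and> r < R)"
  by (auto simp: K_def cp_idx_def)

lemma free_idx_cases:
  assumes "v \<in> free_idx"
  obtains r where "v = (0, r, 0)" "r + 1 < R"
  | g k r where "v = (g, k, r)" "g \<in> {1, 2, 3}" "1 \<le> k" "k < cp_dim g" "r < R"
  using assms unfolding free_idx_def weight_idx_def by blast

lemma J_cases:
  assumes "j \<in> J"
  obtains r where "j = (0, 0, r, 0)" "r + 1 < R"
  | m r i where "j = (1, m, r, i)" "m \<in> {1..M}" "r < R" "i + 1 < I"
  using assms unfolding J_def pctf_idx_def by blast

lemma K_split: "K = ones_idx \<union> insert last_weight_idx free_idx"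
  using R_pos cp_dim_def
  by (auto simp: K_def cp_idx_def ones_idx_def last_weight_idx_def free_idx_def weight_idx_def)

lemma K_split_disjoint: "ones_idx \<inter> insert last_weight_idx free_idx = {}" "last_weight_idx \<notin> free_idx"
  by (auto simp: ones_idx_def last_weight_idx_def free_idx_def weight_idx_def)

lemma finite_K: "finite K"
proof -
  have "K \<subseteq> {..3} \<times> {..<R + cp_dim 1 + cp_dim 2 + cp_dim 3} \<times> {..<R}"
    by (auto simp: K_def cp_idx_def)
  then show ?thesis
    using finite_subset by blast
qed

lemma finite_ones_idx: "finite ones_idx" and finite_free_idx: "finite free_idx"
  using finite_K by (auto simp: K_split intro: finite_subset)

lemma bij_betw_coord_index: "bij_betw coord_index free_idx J"
proof (rule bij_betw_byWitness[where f' = cp_index])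
  show "\<forall>v\<in>free_idx. cp_index (coord_index v) = v"
    by (auto elim!: free_idx_cases
        simp: coord_index_def cp_index_def row_index_row_variable row_variable_in_block block_of_eq)
  show "\<forall>j\<in>J. coord_index (cp_index j) = j"
    by (auto elim!: J_cases simp: coord_index_def cp_index_def row_index_inverse block_of_nonzero)
  show "coord_index ` free_idx \<subseteq> J"
  proof (rule image_subsetI)
    fix v assume "v \<in> free_idx"
    then show "coord_index v \<in> J"
    proof (cases rule: free_idx_cases)
      case (1 r)
      then show ?thesis
        by (simp add: coord_index_def J_def pctf_idx_def)
    next
      case (2 g k r)
      then have "row_variable g k \<in> {1..M}"
        using row_variable_in_block block_subset by blast
      with 2 show ?thesis
        using row_entry_bound[of k] by (auto simp: coord_index_def J_def pctf_idx_def)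
    qed
  qed
  show "cp_index ` J \<subseteq> free_idx"
  proof (rule image_subsetI)
    fix j assume "j \<in> J"
    then show "cp_index j \<in> free_idx"
    proof (cases rule: J_cases)
      case (1 r)
      then show ?thesis
        by (simp add: cp_index_def free_idx_def weight_idx_def)
    next
      case (2 m r i)
      then show ?thesis
        using block_of_in_block[OF 2(2)] row_index_inverse[OF 2(2,4)]
        by (auto simp: cp_index_def free_idx_def weight_idx_def)
    qed
  qed
qed

abbreviation triplets :: "nat set set" where
  "triplets \<equiv> {{j, k, l} | j k l. j \<in> M1 \<and> k \<in> M2 \<and> l \<in> M3}"

definition factor :: "(nat \<Rightarrow> nat \<Rightarrow> nat \<Rightarrow> real) \<Rightarrow> nat \<Rightarrow> nat \<Rightarrow> nat \<Rightarrow> real" where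
  "factor a g k r = (if k = 0 then 1 else a (row_variable g k) r (row_entry k))"

definition row_selects :: "nat \<Rightarrow> nat \<Rightarrow> real" where
  "row_selects k i = (if k = 0 \<or> i = row_entry k then 1 else 0)"

lemma factor_eq_sum:
  assumes "pctf_Theta I M R lam a" "g \<in> {1, 2, 3}" "k < cp_dim g" "r < R"
  shows "factor a g k r = (\<Sum>i<I. row_selects k i * a (row_variable g k) r i)"
proof (cases "k = 0")
  case True
  have "row_variable g k \<in> {1..M}"
    using row_variable_in_block[OF assms(2,3)] block_subset[OF assms(2)] by blast
  with True assms(1,4) show ?thesis
    by (simp add: factor_def row_selects_def pctf_Theta_def)
next
  case False
  have "(\<Sum>i<I. row_selects k i * a (row_variable g k) r i)
      = (\<Sum>i<I. if i = row_entry k then a (row_variable g k) r i else 0)"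
    using False by (intro sum.cong) (auto simp: row_selects_def)
  moreover have "row_entry k < I"
    using row_entry_bound[of k] by simp
  ultimately show ?thesis
    using False by (simp add: factor_def)
qed

lemma factor_tensor_eq_marginal3_sum:
  assumes \<Theta>: "pctf_Theta I M R lam a" and k: "k1 < cp_dim 1" "k2 < cp_dim 2" "k3 < cp_dim 3"
  shows "(\<Sum>r<R. lam r * factor a 1 k1 r * factor a 2 k2 r * factor a 3 k3 r)
    = (\<Sum>i1<I. \<Sum>i2<I. \<Sum>i3<I. row_selects k1 i1 * row_selects k2 i2 * row_selects k3 i3
        * marginal3 R lam a (row_variable 1 k1) (row_variable 2 k2) (row_variable 3 k3) i1 i2 i3)"
proof -
  let ?m1 = "row_variable 1 k1" and ?m2 = "row_variable 2 k2" and ?m3 = "row_variable 3 k3"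
  have "(\<Sum>r<R. lam r * factor a 1 k1 r * factor a 2 k2 r * factor a 3 k3 r)
      = (\<Sum>r<R. lam r * (\<Sum>i<I. row_selects k1 i * a ?m1 r i) * (\<Sum>i<I. row_selects k2 i * a ?m2 r i)
          * (\<Sum>i<I. row_selects k3 i * a ?m3 r i))"
  proof (rule sum.cong)
    fix r assume "r \<in> {..<R}"
    then have r: "r < R"
      by simp
    show "lam r * factor a 1 k1 r * factor a 2 k2 r * factor a 3 k3 r
        = lam r * (\<Sum>i<I. row_selects k1 i * a ?m1 r i) * (\<Sum>i<I. row_selects k2 i * a ?m2 r i)
          * (\<Sum>i<I. row_selects k3 i * a ?m3 r i)"
      using factor_eq_sum[OF \<Theta> _ k(1) r] factor_eq_sum[OF \<Theta> _ k(2) r] factor_eq_sum[OF \<Theta> _ k(3) r]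
      by simp
  qed simp
  then show ?thesis
    by (simp add: sum_trilinear marginal3_def)
qed

lemma factor_tensor_eq_if_pctf_mu_eq:
  assumes "pctf_Theta I M R lam a" "pctf_Theta I M R lam' a'"
    and mu: "pctf_mu I R triplets lam a = pctf_mu I R triplets lam' a'"
    and k: "k1 < cp_dim 1" "k2 < cp_dim 2" "k3 < cp_dim 3"
  shows "(\<Sum>r<R. lam r * factor a 1 k1 r * factor a 2 k2 r * factor a 3 k3 r)
    = (\<Sum>r<R. lam' r * factor a' 1 k1 r * factor a' 2 k2 r * factor a' 3 k3 r)"
proof -
  let ?m1 = "row_variable 1 k1" and ?m2 = "row_variable 2 k2" and ?m3 = "row_variable 3 k3"
  have "?m1 \<in> M1" "?m2 \<in> M2" "?m3 \<in> M3"
    using k row_variable_in_block[of 1 k1] row_variable_in_block[of 2 k2] row_variable_in_block[of 3 k3]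
    by (simp_all add: block_def)
  then have "{?m1, ?m2, ?m3} \<in> triplets" "distinct [?m1, ?m2, ?m3]"
    using disjoint by auto
  then have "marginal3 R lam a ?m1 ?m2 ?m3 i1 i2 i3 = marginal3 R lam' a' ?m1 ?m2 ?m3 i1 i2 i3"
    if "i1 < I" "i2 < I" "i3 < I" for i1 i2 i3
    using pctf_mu_eq_imp_marginal3_eq[OF mu] that by blast
  then show ?thesis
    unfolding factor_tensor_eq_marginal3_sum[OF assms(1) k] factor_tensor_eq_marginal3_sum[OF assms(2) k]
    by simp
qed

definition coords_weight :: "(nat \<times> nat \<times> nat \<times> nat \<Rightarrow> real) \<Rightarrow> nat \<Rightarrow> real" where
  "coords_weight c r = (if r + 1 < R then c (0, 0, r, 0) else 1 - (\<Sum>r'<R - 1. c (0, 0, r', 0)))"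

definition ones_prod :: "(nat \<Rightarrow> nat \<Rightarrow> real) \<Rightarrow> nat \<Rightarrow> real" where
  "ones_prod \<alpha> r = \<alpha> 1 r * \<alpha> 2 r * \<alpha> 3 r"

definition cp_embed ::
    "(nat \<Rightarrow> nat \<Rightarrow> real) \<Rightarrow> real \<Rightarrow> (nat \<times> nat \<times> nat \<times> nat \<Rightarrow> real) \<Rightarrow> nat \<times> nat \<times> nat \<Rightarrow> real" where
  "cp_embed \<alpha> t c = (\<lambda>(d, k, r)\<in>K. if d = 0 then t * coords_weight c k / ones_prod \<alpha> k
     else \<alpha> d r * (if k = 0 then 1 else c (coord_index (d, k, r))))"

lemma cp_embed_weight:
  assumes "pctf_Theta I M R lam a" "r < R"
  shows "cp_embed \<alpha> t (pctf_coords I M R lam a) (0, r, 0) = t * lam r / ones_prod \<alpha> r"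
proof -
  have "coords_weight (pctf_coords I M R lam a) r = lam r"
  proof (cases "r + 1 < R")
    case False
    then have "r = R - 1"
      using assms(2) by simp
    moreover have "(\<Sum>r<R. lam r) = 1"
      using assms(1) by (simp add: pctf_Theta_def)
    moreover have "(\<Sum>r<R. lam r) = (\<Sum>r<R - 1. lam r) + lam (R - 1)"
      using R_pos sum.lessThan_Suc[of lam "R - 1"] by simp
    ultimately show ?thesis
      using False by (simp add: coords_weight_def pctf_coords_weight)
  qed (simp add: coords_weight_def pctf_coords_weight)
  with assms(2) show ?thesis
    by (simp add: cp_embed_def K_iff)
qed

lemma cp_embed_factor:
  assumes "g \<in> {1, 2, 3}" "k < cp_dim g" "r < R"
  shows "cp_embed \<alpha> t (pctf_coords I M R lam a) (g, k, r) = \<alpha> g r * factor a g k r"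
proof -
  have "g \<noteq> 0" "(g, k, r) \<in> K"
    using assms by (auto simp: K_iff)
  moreover have "coord_index (g, k, r) = (1, row_variable g k, r, row_entry k)"
    using \<open>g \<noteq> 0\<close> by (simp add: coord_index_def)
  moreover have "pctf_coords I M R lam a (1, row_variable g k, r, row_entry k)
      = a (row_variable g k) r (row_entry k)"
    using assms(3) row_variable_in_block[OF assms(1,2)] block_subset[OF assms(1)] row_entry_bound[of k]
    by (intro pctf_coords_factor) auto
  ultimately show ?thesis
    by (simp add: cp_embed_def factor_def)
qed

lemma cp_tensor_cp_embed:
  assumes "pctf_Theta I M R lam a" and \<alpha>: "\<forall>g\<in>{1, 2, 3}. \<forall>r<R. \<alpha> g r \<noteq> 0"
    and "k1 < cp_dim 1" "k2 < cp_dim 2" "k3 < cp_dim 3"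
  shows "cp_tensor R (cp_embed \<alpha> t (pctf_coords I M R lam a)) k1 k2 k3
    = t * (\<Sum>r<R. lam r * factor a 1 k1 r * factor a 2 k2 r * factor a 3 k3 r)"
  unfolding cp_tensor_def sum_distrib_left
proof (rule sum.cong)
  fix r assume "r \<in> {..<R}"
  with \<alpha> have "ones_prod \<alpha> r \<noteq> 0"
    by (simp add: ones_prod_def)
  with assms \<open>r \<in> {..<R}\<close> show "cp_embed \<alpha> t (pctf_coords I M R lam a) (0, r, 0)
      * cp_embed \<alpha> t (pctf_coords I M R lam a) (1, k1, r)
      * cp_embed \<alpha> t (pctf_coords I M R lam a) (2, k2, r)
      * cp_embed \<alpha> t (pctf_coords I M R lam a) (3, k3, r)
    = t * (lam r * factor a 1 k1 r * factor a 2 k2 r * factor a 3 k3 r)"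
    by (simp add: cp_embed_weight cp_embed_factor) (simp add: ones_prod_def field_simps)
qed simp

definition coord_scale :: "(nat \<Rightarrow> nat \<Rightarrow> real) \<Rightarrow> real \<Rightarrow> nat \<times> nat \<times> nat \<Rightarrow> real" where
  "coord_scale \<alpha> t = (\<lambda>(d, k, r). if d = 0 then t / ones_prod \<alpha> k else \<alpha> d r)"

lemma weight_idx_subset: "weight_idx \<subseteq> free_idx"
  by (simp add: free_idx_def)

lemma sum_weight_idx: "(\<Sum>v\<in>weight_idx. f v) = (\<Sum>r<R - 1. f (0, r, 0))"
proof -
  have "weight_idx = (\<lambda>r. (0, r, 0)) ` {..<R - 1}"
    by (auto simp: weight_idx_def)
  then show ?thesis
    by (simp add: sum.reindex inj_on_def)
qed

text \<open>The split of \<open>cp_embed \<alpha> t c\<close> along \<open>K = ones_idx \<union> insert last_weight_idx free_idx\<close>: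
  the free coordinates are a rescaled copy of \<open>c\<close>, and the last weight is the affine function of
  them fixed by \<open>\<Sum>\<^sub>r ones_prod \<alpha> r * weight\<^sub>r = t\<close>.\<close>

lemma cp_embed_eq_merge:
  fixes \<alpha> :: "nat \<Rightarrow> nat \<Rightarrow> real" and t :: real and c :: "nat \<times> nat \<times> nat \<times> nat \<Rightarrow> real"
  assumes "\<forall>r<R. ones_prod \<alpha> r \<noteq> 0"
  defines "y \<equiv> \<lambda>v\<in>free_idx. coord_scale \<alpha> t v * c (coord_index v)"
  shows "cp_embed \<alpha> t c = merge ones_idx (insert last_weight_idx free_idx)
    (\<lambda>(g, _, r)\<in>ones_idx. \<alpha> g r,
     y(last_weight_idx :=
         (t - (\<Sum>v\<in>weight_idx. (\<lambda>(_, k, _). ones_prod \<alpha> k) v * y v)) / ones_prod \<alpha> (R - 1)))"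
    (is "_ = ?merge")
proof
  fix v :: "nat \<times> nat \<times> nat"
  obtain d k r where v: "v = (d, k, r)"
    by (cases v) auto
  consider "v \<in> ones_idx" | "v = last_weight_idx" | "v \<in> free_idx" | "v \<notin> K"
    using K_split by auto
  then show "cp_embed \<alpha> t c v = ?merge v"
  proof cases
    case 1
    then show ?thesis
      using K_split by (auto simp: cp_embed_def merge_def ones_idx_def)
  next
    case 2
    have "(\<Sum>v\<in>weight_idx. (\<lambda>(_, k, _). ones_prod \<alpha> k) v * y v) = t * (\<Sum>r<R - 1. c (0, 0, r, 0))"
      unfolding sum_weight_idx sum_distrib_left using assms(1)
      by (intro sum.cong) (auto simp: y_def free_idx_def weight_idx_def coord_scale_def coord_index_def)
    with 2 K_split K_split_disjoint assms(1) R_pos show ?thesis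
      by (auto simp: cp_embed_def merge_def last_weight_idx_def coords_weight_def diff_divide_distrib
          right_diff_distrib)
  next
    case 3
    then have "v \<notin> ones_idx" "v \<noteq> last_weight_idx" "v \<in> K"
      using K_split K_split_disjoint by auto
    then have "?merge v = y v"
      using 3 by (simp add: merge_def)
    moreover have "cp_embed \<alpha> t c v = y v"
      using 3 \<open>v \<in> K\<close>
      by (auto elim!: free_idx_cases
          simp: cp_embed_def y_def coord_scale_def coords_weight_def coord_index_def)
    ultimately show ?thesis
      by simp
  next
    case 4
    then show ?thesis
      using K_split by (auto simp: cp_embed_def merge_def)
  qed
qed

lemma exists_generic_cp_embed:
  assumes N: "N \<in> null_sets (lborel_on K)"
  obtains \<alpha> t Z where "\<forall>g\<in>{1, 2, 3}. \<forall>r<R. \<alpha> g r \<noteq> 0" "t \<noteq> 0" "Z \<in> null_sets (lborel_on J)"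
    "\<And>c. c \<in> space (lborel_on J) - Z \<Longrightarrow> cp_embed \<alpha> t c \<notin> N"
proof -
  let ?l = last_weight_idx and ?V = free_idx
  obtain u where u: "u \<in> space (lborel_on ones_idx)" "\<forall>j\<in>ones_idx. u j \<noteq> 0"
    and N1: "{x \<in> space (lborel_on (insert ?l ?V)). merge ones_idx (insert ?l ?V) (u, x) \<in> N}
      \<in> null_sets (lborel_on (insert ?l ?V))" (is "?N1 \<in> _")
    using exists_nonzero_null_section[of ones_idx "insert ?l ?V" N] N
      finite_ones_idx finite_free_idx K_split K_split_disjoint by auto
  define \<alpha> where "\<alpha> g r = u (g, 0, r)" for g r
  have \<alpha>: "\<forall>g\<in>{1, 2, 3}. \<forall>r<R. \<alpha> g r \<noteq> 0"
    using u(2) by (auto simp: \<alpha>_def ones_idx_def)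
  then have w: "\<forall>r<R. ones_prod \<alpha> r \<noteq> 0"
    by (simp add: ones_prod_def)
  have u_eq: "u = (\<lambda>(g, _, r)\<in>ones_idx. \<alpha> g r)"
    using u(1) by (auto simp: \<alpha>_def space_PiM PiE_iff extensional_def ones_idx_def)
  obtain t where t: "t \<noteq> 0" and N2: "{y \<in> space (lborel_on ?V).
      y(?l := (t - (\<Sum>v\<in>weight_idx. (\<lambda>(_, k, _). ones_prod \<alpha> k) v * y v)) / ones_prod \<alpha> (R - 1)) \<in> ?N1}
      \<in> null_sets (lborel_on ?V)" (is "?N2 \<in> _")
  proof -
    have "(\<lambda>(_, k, _). ones_prod \<alpha> k) ?l \<noteq> 0"
      using w R_pos by (simp add: last_weight_idx_def)
    from exists_nonzero_null_hyperplane_section[where w = "\<lambda>(_, k, _). ones_prod \<alpha> k",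
        OF finite_free_idx K_split_disjoint(2) weight_idx_subset this N1]
    show thesis
      using that by (simp add: last_weight_idx_def) blast
  qed
  define Z where "Z = {c \<in> space (lborel_on J). (\<lambda>v\<in>?V. coord_scale \<alpha> t v * c (coord_index v)) \<in> ?N2}"
  have "Z \<in> null_sets (lborel_on J)"
    unfolding Z_def using \<alpha> w t
    by (intro null_sets_reindex_scale_preimage[OF finite_free_idx bij_betw_coord_index _ N2])
      (auto elim!: free_idx_cases simp: coord_scale_def)
  moreover have "cp_embed \<alpha> t c \<notin> N" if "c \<in> space (lborel_on J) - Z" for c
    using that cp_embed_eq_merge[OF w, of t c] unfolding u_eq[symmetric]
    by (auto simp: Z_def space_PiM PiE_iff extensional_def)
  ultimately show ?thesis
    using that \<alpha> t by blast
qed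

lemma factor_row_index:
  assumes "m \<in> {1..M}" "i + 1 < I"
  shows "factor a (block_of m) (row_index m i) r = a m r i"
  using row_index_inverse[OF assms] by (simp add: factor_def)

lemma factor_scaling_imp_eq:
  assumes "g \<in> {1, 2, 3}" "r < R" "r' < R" "\<alpha> g r \<noteq> 0" "\<alpha> g r' \<noteq> 0"
    and scaled: "\<And>k. k < cp_dim g \<Longrightarrow> cp_embed \<alpha> t (pctf_coords I M R lam' a') (g, k, r)
      = s * cp_embed \<alpha> t (pctf_coords I M R lam a) (g, k, r')"
  shows "s = \<alpha> g r / \<alpha> g r'" "\<And>k. k < cp_dim g \<Longrightarrow> factor a' g k r = factor a g k r'"
proof -
  have scaled_factor: "\<alpha> g r * factor a' g k r = s * (\<alpha> g r' * factor a g k r')" if "k < cp_dim g" for k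
    using scaled[OF that] cp_embed_factor[OF assms(1) that assms(2)]
      cp_embed_factor[OF assms(1) that assms(3)]
    by simp
  from scaled_factor[of 0] have s: "\<alpha> g r = s * \<alpha> g r'"
    by (simp add: cp_dim_def factor_def)
  with assms(5) show "s = \<alpha> g r / \<alpha> g r'"
    by (simp add: field_simps)
  show "factor a' g k r = factor a g k r'" if "k < cp_dim g" for k
    using scaled_factor[OF that] assms(4) by (simp add: s)
qed

lemma weight_scaling_imp_eq:
  assumes "pctf_Theta I M R lam a" "pctf_Theta I M R lam' a'" "r < R" "r' < R" "t \<noteq> 0"
    and \<alpha>: "\<forall>g\<in>{1, 2, 3}. \<alpha> g r \<noteq> 0 \<and> \<alpha> g r' \<noteq> 0"
    and \<delta>: "\<delta> * (\<alpha> 1 r / \<alpha> 1 r') * (\<alpha> 2 r / \<alpha> 2 r') * (\<alpha> 3 r / \<alpha> 3 r') = 1"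
    and scaled: "cp_embed \<alpha> t (pctf_coords I M R lam' a') (0, r, 0)
      = \<delta> * cp_embed \<alpha> t (pctf_coords I M R lam a) (0, r', 0)"
  shows "lam' r = lam r'"
proof -
  have nonzero: "ones_prod \<alpha> r \<noteq> 0" "ones_prod \<alpha> r' \<noteq> 0"
    using \<alpha> by (simp_all add: ones_prod_def)
  have \<delta>_eq: "\<delta> * ones_prod \<alpha> r = ones_prod \<alpha> r'"
    using \<delta> \<alpha> by (simp add: ones_prod_def field_simps)
  have "t * lam' r / ones_prod \<alpha> r = \<delta> * (t * lam r' / ones_prod \<alpha> r')"
    using scaled cp_embed_weight[OF assms(2,3)] cp_embed_weight[OF assms(1,4)] by simp
  then have "t * lam' r = \<delta> * ones_prod \<alpha> r * (t * lam r') / ones_prod \<alpha> r'"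
    using nonzero by (simp add: field_simps)
  also have "\<dots> = t * lam r'"
    using \<delta>_eq nonzero by simp
  finally show ?thesis
    using \<open>t \<noteq> 0\<close> by simp
qed

lemma cp_equivalent_cp_embed_imp_block_perm:
  assumes \<Theta>: "pctf_Theta I M R lam a" and \<Theta>': "pctf_Theta I M R lam' a'"
    and \<alpha>: "\<forall>g\<in>{1, 2, 3}. \<forall>r<R. \<alpha> g r \<noteq> 0" and "t \<noteq> 0"
    and "cp_equivalent (cp_dim 1) (cp_dim 2) (cp_dim 3) R
      (cp_embed \<alpha> t (pctf_coords I M R lam a)) (cp_embed \<alpha> t (pctf_coords I M R lam' a'))"
  shows "pctf_block_perm I M R lam a lam' a'"
proof -
  let ?p = "cp_embed \<alpha> t (pctf_coords I M R lam a)" and ?p' = "cp_embed \<alpha> t (pctf_coords I M R lam' a')"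
  obtain \<sigma> \<delta> \<beta>1 \<beta>2 \<beta>3 where \<sigma>: "bij_betw \<sigma> {..<R} {..<R}"
    and E: "\<forall>r<R. \<delta> r * \<beta>1 r * \<beta>2 r * \<beta>3 r = 1 \<and> ?p' (0, r, 0) = \<delta> r * ?p (0, \<sigma> r, 0) \<and>
         (\<forall>k<cp_dim 1. ?p' (1, k, r) = \<beta>1 r * ?p (1, k, \<sigma> r)) \<and>
         (\<forall>k<cp_dim 2. ?p' (2, k, r) = \<beta>2 r * ?p (2, k, \<sigma> r)) \<and>
         (\<forall>k<cp_dim 3. ?p' (3, k, r) = \<beta>3 r * ?p (3, k, \<sigma> r))"
    using assms(5) unfolding cp_equivalent_def by blast
  define \<beta> where "\<beta> g = (if g = 1 then \<beta>1 else if g = 2 then \<beta>2 else \<beta>3)" for g :: nat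
  have \<sigma>_less: "\<sigma> r < R" if "r < R" for r
    using \<sigma> that by (auto simp: bij_betw_def)
  have rows: "\<beta> g r = \<alpha> g r / \<alpha> g (\<sigma> r) \<and> (\<forall>k<cp_dim g. factor a' g k r = factor a g k (\<sigma> r))"
    if g: "g \<in> {1, 2, 3}" and r: "r < R" for g r
  proof -
    have scaled: "?p' (g, k, r) = \<beta> g r * ?p (g, k, \<sigma> r)" if "k < cp_dim g" for k
      using E r g that by (auto simp: \<beta>_def)
    have "\<alpha> g r \<noteq> 0" "\<alpha> g (\<sigma> r) \<noteq> 0"
      using \<alpha> g r \<sigma>_less[OF r] by auto
    from factor_scaling_imp_eq[OF g r \<sigma>_less[OF r] this scaled] show ?thesis
      by blast
  qed
  have weights: "lam' r = lam (\<sigma> r)" if r: "r < R" for r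
  proof (rule weight_scaling_imp_eq[OF \<Theta> \<Theta>' r \<sigma>_less[OF r] \<open>t \<noteq> 0\<close>])
    show "\<forall>g\<in>{1, 2, 3}. \<alpha> g r \<noteq> 0 \<and> \<alpha> g (\<sigma> r) \<noteq> 0"
      using \<alpha> r \<sigma>_less[OF r] by blast
    show "\<delta> r * (\<alpha> 1 r / \<alpha> 1 (\<sigma> r)) * (\<alpha> 2 r / \<alpha> 2 (\<sigma> r)) * (\<alpha> 3 r / \<alpha> 3 (\<sigma> r)) = 1"
    proof -
      have "\<delta> r * \<beta> 1 r * \<beta> 2 r * \<beta> 3 r = 1"
        using E r by (simp add: \<beta>_def)
      moreover have "\<beta> g r = \<alpha> g r / \<alpha> g (\<sigma> r)" if "g \<in> {1, 2, 3}" for g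
        using rows[OF that r] by blast
      ultimately show ?thesis
        by (metis insertCI)
    qed
    show "?p' (0, r, 0) = \<delta> r * ?p (0, \<sigma> r, 0)"
      using E r by blast
  qed
  have factors: "a' m r i = a m (\<sigma> r) i" if m: "m \<in> {1..M}" and r: "r < R" and i: "i < I" for m r i
  proof (rule eq_if_sum_eq_and_eq_but_last[OF _ _ i])
    show "(\<Sum>i<I. a' m r i) = (\<Sum>i<I. a m (\<sigma> r) i)"
      using \<Theta> \<Theta>' m r \<sigma>_less[OF r] by (simp add: pctf_Theta_def)
    show "a' m r i = a m (\<sigma> r) i" if "i + 1 < I" for i
      using rows[OF conjunct1[OF block_of_in_block[OF m]] r] row_index_inverse(4)[OF m that]
        factor_row_index[OF m that] by metis
  qed
  show ?thesis
    unfolding pctf_block_perm_def using \<sigma> weights factors by blast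
qed

theorem pctf_identifiable_if_cp_identifiable:
  assumes "cp_identifiable (cp_dim 1) (cp_dim 2) (cp_dim 3) R"
  shows "pctf_identifiable I M R triplets"
proof -
  have measure: "cp_measure (cp_dim 1) (cp_dim 2) (cp_dim 3) R = lborel_on K"
    by (simp add: cp_measure_def K_def)
  obtain N where N: "N \<in> null_sets (lborel_on K)"
    and unique: "\<And>p p'. p \<in> space (lborel_on K) - N \<Longrightarrow> p' \<in> space (lborel_on K) \<Longrightarrow>
      (\<forall>k1<cp_dim 1. \<forall>k2<cp_dim 2. \<forall>k3<cp_dim 3. cp_tensor R p' k1 k2 k3 = cp_tensor R p k1 k2 k3) \<Longrightarrow>
      cp_equivalent (cp_dim 1) (cp_dim 2) (cp_dim 3) R p p'"
    using assms unfolding cp_identifiable_def measure by blast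
  obtain \<alpha> t Z where \<alpha>: "\<forall>g\<in>{1, 2, 3}. \<forall>r<R. \<alpha> g r \<noteq> 0" and t: "t \<noteq> 0"
    and Z: "Z \<in> null_sets (lborel_on J)" and generic: "\<And>c. c \<in> space (lborel_on J) - Z \<Longrightarrow> cp_embed \<alpha> t c \<notin> N"
    using exists_generic_cp_embed[OF N] by blast
  have "pctf_block_perm I M R lam a lam' a'"
    if \<Theta>: "pctf_Theta I M R lam a" and "pctf_coords I M R lam a \<notin> Z"
      and \<Theta>': "pctf_Theta I M R lam' a'" and mu: "pctf_mu I R triplets lam' a' = pctf_mu I R triplets lam a"
    for lam a lam' a'
  proof (rule cp_equivalent_cp_embed_imp_block_perm[OF \<Theta> \<Theta>' \<alpha> t], rule unique)
    show "cp_embed \<alpha> t (pctf_coords I M R lam a) \<in> space (lborel_on K) - N"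
      using that generic by (auto simp: pctf_coords_def J_def space_PiM cp_embed_def)
    show "cp_embed \<alpha> t (pctf_coords I M R lam' a') \<in> space (lborel_on K)"
      by (simp add: cp_embed_def space_PiM)
    show "\<forall>k1<cp_dim 1. \<forall>k2<cp_dim 2. \<forall>k3<cp_dim 3.
        cp_tensor R (cp_embed \<alpha> t (pctf_coords I M R lam' a')) k1 k2 k3
        = cp_tensor R (cp_embed \<alpha> t (pctf_coords I M R lam a)) k1 k2 k3"
      using factor_tensor_eq_if_pctf_mu_eq[OF \<Theta> \<Theta>' mu[symmetric]] by (simp add: cp_tensor_cp_embed \<Theta> \<Theta>' \<alpha>)
  qed
  with Z show ?thesis
    unfolding pctf_identifiable_def J_def by blast
qed

end

theorem mainTheorem1:
  fixes I M R :: nat and M1 M2 M3 :: "nat set" and T :: "nat set set"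
  assumes "I \<ge> 2" and "M > 3" and "R \<ge> 1"
    and "M1 \<noteq> {}" and "M2 \<noteq> {}" and "M3 \<noteq> {}"
    and "M1 \<inter> M2 = {}" and "M1 \<inter> M3 = {}" and "M2 \<inter> M3 = {}"
    and "M1 \<union> M2 \<union> M3 = {1..M}"
    and "T = {{j, k, l} | j k l. j \<in> M1 \<and> k \<in> M2 \<and> l \<in> M3}"
    and "cp_identifiable ((I - 1) * card M1 + 1) ((I - 1) * card M2 + 1) ((I - 1) * card M3 + 1) R"
  shows "pctf_identifiable I M R T"
proof -
  interpret cartesian_coupling I M R M1 M2 M3
    using assms by unfold_locales auto
  have "cp_dim 1 = (I - 1) * card M1 + 1" "cp_dim 2 = (I - 1) * card M2 + 1"
    "cp_dim 3 = (I - 1) * card M3 + 1"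
    by (simp_all add: cp_dim_def block_def)
  with assms(11,12) show ?thesis
    using pctf_identifiable_if_cp_identifiable by simp
qed

end
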